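(* Let $\beta>1$ and let $t\in[0,1)\setminus\mathcal U$. Then there exists a $\beta$-rational number $r\in\mathbb Q_{(\beta)}$ such that $t\in I_r^*=(r,r^* )$. Moreover both endpoints $r$ and $r^*$ of $I_r^*$ are bifurcation parameters (that is, $r\in\mathcal U$, and $r^*\in\mathcal U$ or $r^*=1$).
   Context: Let $\gamma=\beta-1$ if $\beta$ is an integer and $\gamma=\lfloor\beta\rfloor$ otherwise. $T_\beta(x)=\beta x-\lfloor\beta x\rfloor$ on $[0,1)$. The greedy $\beta$-expansion of $x\in[0,1)$ is $b(x,\beta)=(b_i)$ with $b_i=\lfloor\beta T_\beta^{i-1}(x)\rfloor$. The quasi-greedy $\beta$-expansion $\alpha(\beta)$ of $1$ is the lexicographically largest sequence in $\{0,\dots,\gamma\}^{\mathbb N}$, not eventually zero, with $1=\sum_i\alpha(\beta)_i\beta^{-i}$. $\sigma$ is the left shift, $\prec,\preceq$ the lexicographic order, and $\pi((x_i))=\sum_i x_i\beta^{-i}$. $\Sigma_\beta=\{\omega\in\{0,\dots,\gamma\}^{\mathbb N}\colon\sigma^k(\omega)\prec\alpha(\beta)\ \forall k\ge0\}$ (the set of greedy expansions). A number $r\in(0,1)$ is $\beta$-rational if $b(r,\beta)=r_1\cdots r_m0^\infty$ with $r_m\ne0$; $\mathbb Q_{(\beta)}$ is the set of such numbers. For such $r$ define $r^*$ as follows. If the periodic sequence $(r_1\cdots r_m)^\infty\in\Sigma_\beta$, then $r^*=\pi((r_1\cdots r_m)^\infty)$. Otherwise, if $r_1=\gamma$, set $r^*=\pi(\alpha(\beta))=1$;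 if $r_1<\gamma$, start from $x^{(0)}=(r_1\cdots r_m)^\infty$ and, as long as $x^{(i)}\notin\Sigma_\beta$, let $j=\min\{k\ge0\colon\sigma^k(x^{(i)})\succeq\alpha(\beta)\}$ (one has $j\ge1$) and set $x^{(i+1)}=x^{(i)}_1\cdots x^{(i)}_{j-1}(x^{(i)}_j+1)0^\infty$; this terminates after finitely many steps at a sequence $\tilde r'\in\Sigma_\beta$, and $r^*=\pi(\tilde r')$. Put $I_r^*=(r,r^* )$. For $0<t<1$ let $K(t)=\{x\in[0,1)\colon T_\beta^k(x)\notin(0,t)\ \forall k\ge0\}$, $K(0)=[0,1)$, $K(1)=\{0\}$. A parameter $t\in[0,1]$ is a bifurcation parameter if $t\in\{0,1\}$, or $0<t<1$ and for every $\delta>0$ there is $t'\in(t-\delta,t+\delta)$ with $K(t')\ne K(t)$; $\mathcal U$ is the set of bifurcation parameters in $[0,1)$. *)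

theory Defs
  imports "HOL-Analysis.Analysis"
begin

text \<open>Digit sequences are functions nat \<Rightarrow> nat, indexed from 0:
  position i of a sequence corresponds to the (i+1)-st digit of the paper.\<close>

definition gam :: "real \<Rightarrow> nat" where
  "gam \<beta> = (if \<beta> \<in> \<int> then nat \<lfloor>\<beta>\<rfloor> - 1 else nat \<lfloor>\<beta>\<rfloor>)"

definition Tb :: "real \<Rightarrow> real \<Rightarrow> real" where
  "Tb \<beta> x = \<beta> * x - of_int \<lfloor>\<beta> * x\<rfloor>"

definition greedy :: "real \<Rightarrow> real \<Rightarrow> nat \<Rightarrow> nat" where
  "greedy \<beta> x = (\<lambda>i. nat \<lfloor>\<beta> * (Tb \<beta> ^^ i) x\<rfloor>)"

definition piv :: "real \<Rightarrow> (nat \<Rightarrow> nat) \<Rightarrow> real" where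
  "piv \<beta> w = (\<Sum>i. real (w i) / \<beta> ^ Suc i)"

definition shiftk :: "nat \<Rightarrow> (nat \<Rightarrow> nat) \<Rightarrow> (nat \<Rightarrow> nat)" where
  "shiftk k w = (\<lambda>i. w (i + k))"

definition lex_less :: "(nat \<Rightarrow> nat) \<Rightarrow> (nat \<Rightarrow> nat) \<Rightarrow> bool" where
  "lex_less x y \<longleftrightarrow> (\<exists>n. (\<forall>i<n. x i = y i) \<and> x n < y n)"

definition digit_seqs :: "real \<Rightarrow> (nat \<Rightarrow> nat) set" where
  "digit_seqs \<beta> = {w. \<forall>i. w i \<le> gam \<beta>}"

definition quasi_greedy_cands :: "real \<Rightarrow> (nat \<Rightarrow> nat) set" where
  "quasi_greedy_cands \<beta> =
     {w \<in> digit_seqs \<beta>. (\<forall>n. \<exists>i\<ge>n. w i \<noteq> 0) \<and> piv \<beta> w = 1}"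

definition alpha :: "real \<Rightarrow> (nat \<Rightarrow> nat)" where
  "alpha \<beta> = (THE a. a \<in> quasi_greedy_cands \<beta> \<and>
                 (\<forall>b \<in> quasi_greedy_cands \<beta>. \<not> lex_less a b))"

definition Sigma_b :: "real \<Rightarrow> (nat \<Rightarrow> nat) set" where
  "Sigma_b \<beta> = {w \<in> digit_seqs \<beta>. \<forall>k. lex_less (shiftk k w) (alpha \<beta>)}"

definition beta_rat :: "real \<Rightarrow> real set" where
  "beta_rat \<beta> = {r. 0 < r \<and> r < 1 \<and>
      (\<exists>m\<ge>1. greedy \<beta> r (m - 1) \<noteq> 0 \<and> (\<forall>i\<ge>m. greedy \<beta> r i = 0))}"

definition blen :: "real \<Rightarrow> real \<Rightarrow> nat" where
  "blen \<beta> r = (LEAST m. \<forall>i\<ge>m. greedy \<beta> r i = 0)"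

definition perw :: "real \<Rightarrow> real \<Rightarrow> (nat \<Rightarrow> nat)" where
  "perw \<beta> r = (\<lambda>i. greedy \<beta> r (i mod blen \<beta> r))"

text \<open>one step of the algorithm: j = min{k. sigma^k(x) \<succeq> alpha},
  x' = x_1 ... x_{j-1} (x_j + 1) 0^\<infinity> (paper's 1-based indexing)\<close>
definition rstep :: "real \<Rightarrow> (nat \<Rightarrow> nat) \<Rightarrow> (nat \<Rightarrow> nat)" where
  "rstep \<beta> x = (let j = (LEAST k. \<not> lex_less (shiftk k x) (alpha \<beta>)) in
      (\<lambda>i. if i + 1 < j then x i else if i + 1 = j then x i + 1 else 0))"

definition rstar :: "real \<Rightarrow> real \<Rightarrow> real" where
  "rstar \<beta> r =
    (if perw \<beta> r \<in> Sigma_b \<beta> then piv \<beta> (perw \<beta> r)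
     else if greedy \<beta> r 0 = gam \<beta> then piv \<beta> (alpha \<beta>)
     else piv \<beta> ((rstep \<beta> ^^ (LEAST n. (rstep \<beta> ^^ n) (perw \<beta> r) \<in> Sigma_b \<beta>))
                    (perw \<beta> r)))"

definition Kset :: "real \<Rightarrow> real \<Rightarrow> real set" where
  "Kset \<beta> t =
    (if t = 0 then {0..<1}
     else if t = 1 then {0}
     else {x \<in> {0..<1}. \<forall>k. (Tb \<beta> ^^ k) x \<notin> {0<..<t}})"

definition bifurcation :: "real \<Rightarrow> real \<Rightarrow> bool" where
  "bifurcation \<beta> t \<longleftrightarrow> t = 0 \<or> t = 1 \<or>
     (0 < t \<and> t < 1 \<and>
      (\<forall>\<delta>>0. \<exists>t'\<in>{0..1}. \<bar>t' - t\<bar> < \<delta> \<and> Kset \<beta> t' \<noteq> Kset \<beta> t))"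

definition Ubif :: "real \<Rightarrow> real set" where
  "Ubif \<beta> = {t \<in> {0..<1}. bifurcation \<beta> t}"

end

theory Submission
  imports Defs
begin

text \<open>A point \<open>y \<in> (0, 1)\<close> is self-minimal if its \<open>T\<^sub>\<beta>\<close>-orbit never enters \<open>(0, y)\<close>.
  Such a point is a bifurcation parameter: \<open>y \<in> K(s)\<close> for \<open>s \<le> y\<close>, but \<open>y \<notin> K(s)\<close> for \<open>s > y\<close>.
  So if \<open>t\<close> is not a bifurcation parameter, some neighbourhood of \<open>t\<close> contains no self-minimal
  point, and the supremum \<open>r\<close> of the self-minimal points below \<open>t\<close> lies strictly below \<open>t\<close>.
  Self-minimal points are closed under limits from the left, so \<open>r\<close> is self-minimal.  A
  self-minimal point whose orbit avoids \<open>0\<close> is a limit from the right of self-minimal points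
  (push it to the right until an orbit point reaches \<open>1\<close>); hence the orbit of \<open>r\<close> reaches \<open>0\<close>,
  i.e. \<open>r\<close> is \<open>\<beta>\<close>-rational.  Finally, by Parry's description of greedy expansions in terms of
  the quasi-greedy expansion \<open>\<alpha>(\<beta>)\<close> of \<open>1\<close>, the algorithm defining \<open>r\<^sup>*\<close> ends either at \<open>1\<close>
  or at a self-minimal point above \<open>r\<close>, which then has to lie above \<open>t\<close>.\<close>

lemma lex_lessI: "\<forall>i<n. x i = y i \<Longrightarrow> x n < y n \<Longrightarrow> lex_less x y"
  unfolding lex_less_def by auto

lemma lex_less_irrefl: "\<not> lex_less x x"
  unfolding lex_less_def by auto

lemma lex_less_trans:
  assumes "lex_less x y" "lex_less y z"
  shows "lex_less x z"
proof -
  obtain n where n: "\<forall>i<n. x i = y i" "x n < y n"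
    using assms(1) unfolding lex_less_def by auto
  obtain m where m: "\<forall>i<m. y i = z i" "y m < z m"
    using assms(2) unfolding lex_less_def by auto
  show ?thesis
  proof (cases n m rule: linorder_cases)
    case less
    then show ?thesis using n m by (intro lex_lessI[of n]) auto
  next
    case equal
    then show ?thesis using n m by (intro lex_lessI[of n]) auto
  next
    case greater
    then show ?thesis using n m by (intro lex_lessI[of m]) auto
  qed
qed

lemma lex_less_asym: "lex_less x y \<Longrightarrow> \<not> lex_less y x"
  using lex_less_irrefl lex_less_trans by blast

lemma first_difference:
  assumes "\<exists>i<N. x i \<noteq> y i"
  obtains n :: nat where "n < N" "x n \<noteq> y n" "\<forall>i<n. x i = y i"
  using assms exists_least_iff[of "\<lambda>n. n < N \<and> x n \<noteq> y n"] by (meson less_trans)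

lemma lex_less_linear: "x \<noteq> y \<Longrightarrow> lex_less x y \<or> lex_less y x"
proof -
  assume "x \<noteq> y"
  then obtain N where "x N \<noteq> y N" by auto
  then obtain n where "x n \<noteq> y n" "\<forall>i<n. x i = y i"
    using first_difference[of "Suc N" x y] by auto
  then show ?thesis by (metis lex_lessI linorder_neqE_nat)
qed

lemma lex_less_bump:
  assumes "\<not> lex_less x' x" "\<forall>i<N. y i = x i" "\<forall>i<N. y' i = x' i"
    and "y N \<le> x N" "x' N < y' N"
  shows "lex_less y y'"
proof (cases "\<exists>i<N. x i \<noteq> x' i")
  case True
  then obtain n where n: "n < N" "x n \<noteq> x' n" "\<forall>i<n. x i = x' i"
    by (rule first_difference)
  then have "x n < x' n" using assms(1) lex_lessI[of n x' x] by fastforce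
  then show ?thesis using n assms(2,3) by (intro lex_lessI[of n]) auto
next
  case False
  then have "x N \<le> x' N" using assms(1) lex_lessI[of N x' x] by fastforce
  then show ?thesis using False assms(2-5) by (intro lex_lessI[of N]) auto
qed

lemma not_lex_less_zero: "\<not> lex_less x (\<lambda>_. 0)"
  unfolding lex_less_def by auto

lemma zero_lex_less: "a \<noteq> (\<lambda>_. 0) \<Longrightarrow> lex_less (\<lambda>_. 0) a"
  using lex_less_linear not_lex_less_zero by blast

lemma shiftk_0 [simp]: "shiftk 0 w = w"
  unfolding shiftk_def by simp

lemma shiftk_shiftk: "shiftk k (shiftk j w) = shiftk (j + k) w"
  unfolding shiftk_def by (simp add: ac_simps)

lemma lex_less_shiftk_iff:
  assumes "\<forall>i<j. x i = y i"
  shows "lex_less (shiftk j x) (shiftk j y) \<longleftrightarrow> lex_less x y"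
proof
  assume "lex_less (shiftk j x) (shiftk j y)"
  then obtain n where "\<forall>i<n. x (i + j) = y (i + j)" "x (n + j) < y (n + j)"
    unfolding lex_less_def shiftk_def by auto
  moreover have "x i = y i" if "i < n + j" for i
  proof (cases "i < j")
    case False
    then show ?thesis using that \<open>\<forall>i<n. x (i + j) = y (i + j)\<close>[rule_format, of "i - j"] by simp
  qed (use assms in auto)
  ultimately show "lex_less x y" by (intro lex_lessI[of "n + j"]) auto
next
  assume "lex_less x y"
  then obtain n where n: "\<forall>i<n. x i = y i" "x n < y n"
    unfolding lex_less_def by auto
  with assms have "j \<le> n" by (metis less_irrefl not_le)
  then show "lex_less (shiftk j x) (shiftk j y)"
    using n by (intro lex_lessI[of "n - j"]) (auto simp: shiftk_def)
qed

lemma lex_less_zero_tail: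
  assumes "\<forall>i<j. y i = a i" "\<forall>i\<ge>j. y i = 0" "\<exists>i\<ge>j. a i \<noteq> 0"
  shows "lex_less y a"
proof -
  obtain i where "i \<ge> j" "a i \<noteq> 0" using assms(3) by blast
  then have "shiftk j a (i - j) \<noteq> 0" by (simp add: shiftk_def)
  then have "lex_less (\<lambda>_. 0) (shiftk j a)" by (intro zero_lex_less) auto
  moreover have "shiftk j y = (\<lambda>_. 0)" using assms(2) by (auto simp: shiftk_def)
  ultimately show ?thesis using lex_less_shiftk_iff[OF assms(1)] by simp
qed

lemma piv_summable:
  fixes \<beta> :: real
  assumes "\<beta> > 1" "\<forall>i. w i \<le> C"
  shows "summable (\<lambda>i. real (w i) / \<beta> ^ Suc i)"
proof (rule summable_comparison_test)
  have "summable (\<lambda>i. (1 / \<beta>) ^ i)"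
    using assms(1) by (intro summable_geometric) simp
  then show "summable (\<lambda>i. real C * (1 / \<beta>) ^ i)"
    by (rule summable_mult)
  have "real (w i) / \<beta> ^ Suc i \<le> real C * (1 / \<beta>) ^ i" for i
  proof -
    have "real (w i) / \<beta> ^ Suc i \<le> real C / \<beta> ^ i"
      using assms by (intro frac_le) auto
    then show ?thesis by (simp add: power_one_over)
  qed
  then show "\<exists>N. \<forall>n\<ge>N. norm (real (w n) / \<beta> ^ Suc n) \<le> real C * (1 / \<beta>) ^ n"
    using assms(1) by auto
qed

lemma piv_mono:
  fixes \<beta> :: real
  assumes "\<beta> > 1" "\<forall>i. w i \<le> C" "\<forall>i. v i \<le> w i"
  shows "piv \<beta> v \<le> piv \<beta> w"
  unfolding piv_def using assms
  by (intro suminf_le piv_summable[of _ _ C]) (auto intro: order_trans divide_right_mono)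

lemma piv_nonneg: "(\<beta>::real) > 1 \<Longrightarrow> \<forall>i. w i \<le> C \<Longrightarrow> 0 \<le> piv \<beta> w"
  using piv_mono[of \<beta> w C "\<lambda>_. 0"] by (simp add: piv_def)

lemma piv_pos:
  fixes \<beta> :: real
  assumes "\<beta> > 1" "\<forall>i. w i \<le> C" "w k \<noteq> 0"
  shows "0 < piv \<beta> w"
  unfolding piv_def using assms by (intro suminf_pos2[of _ k] piv_summable) auto

lemma piv_split:
  fixes \<beta> :: real
  assumes "\<beta> > 1" "\<forall>i. w i \<le> C"
  shows "piv \<beta> w = (\<Sum>i<n. real (w i) / \<beta> ^ Suc i) + piv \<beta> (shiftk n w) / \<beta> ^ n"
proof -
  have "summable (\<lambda>i. real (shiftk n w i) / \<beta> ^ Suc i)"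
    using assms by (intro piv_summable[of _ _ C]) (auto simp: shiftk_def)
  then have "piv \<beta> (shiftk n w) / \<beta> ^ n = (\<Sum>i. real (shiftk n w i) / \<beta> ^ Suc i / \<beta> ^ n)"
    unfolding piv_def by (rule suminf_divide[symmetric])
  also have "\<dots> = (\<Sum>i. real (w (i + n)) / \<beta> ^ Suc (i + n))"
    by (simp add: shiftk_def power_add mult_ac)
  finally show ?thesis
    using suminf_split_initial_segment[OF piv_summable[OF assms], of n] by (simp add: piv_def)
qed

lemma piv_split1:
  fixes \<beta> :: real
  assumes "\<beta> > 1" "\<forall>i. w i \<le> C"
  shows "\<beta> * piv \<beta> w = real (w 0) + piv \<beta> (shiftk 1 w)"
  using piv_split[OF assms, of 1] assms(1) by (simp add: field_simps)

lemma Tb_range: "0 \<le> Tb \<beta> x \<and> Tb \<beta> x < 1"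
  unfolding Tb_def by linarith

lemma Tb_iter_range: "0 \<le> x \<Longrightarrow> x < 1 \<Longrightarrow> 0 \<le> (Tb \<beta> ^^ k) x \<and> (Tb \<beta> ^^ k) x < 1"
  by (cases k) (auto simp: Tb_range)

lemma Tb_iter_nonneg: "0 \<le> x \<Longrightarrow> 0 \<le> (Tb \<beta> ^^ k) x"
  by (cases k) (auto simp: Tb_range)

lemma Tb_iter_Suc:
  fixes \<beta> :: real
  assumes "\<beta> > 1" "0 \<le> x"
  shows "(Tb \<beta> ^^ Suc k) x = \<beta> * (Tb \<beta> ^^ k) x - real (greedy \<beta> x k)"
proof -
  have "0 \<le> \<beta> * (Tb \<beta> ^^ k) x"
    using assms Tb_iter_nonneg by simp
  then show ?thesis by (simp add: Tb_def greedy_def)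
qed

lemma greedy_shiftk: "shiftk k (greedy \<beta> x) = greedy \<beta> ((Tb \<beta> ^^ k) x)"
  unfolding shiftk_def greedy_def by (simp add: funpow_add)

lemma Tb_iter_0: "(Tb \<beta> ^^ k) 0 = 0"
  by (induction k) (simp_all add: Tb_def)

lemma Tb_iter_eq_0_mono:
  assumes "(Tb \<beta> ^^ j) x = 0" "j \<le> k"
  shows "(Tb \<beta> ^^ k) x = 0"
proof -
  have "(Tb \<beta> ^^ (k - j + j)) x = 0"
    by (simp only: funpow_add o_apply assms(1) Tb_iter_0)
  then show ?thesis using assms(2) by simp
qed

lemma greedy_0: "greedy \<beta> 0 = (\<lambda>_. 0)"
  unfolding greedy_def by (simp add: Tb_iter_0)

lemma gam_eq_ceiling:
  fixes \<beta> :: real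
  assumes "\<beta> > 1"
  shows "int (gam \<beta>) = \<lceil>\<beta>\<rceil> - 1"
proof (cases "\<beta> \<in> \<int>")
  case True
  then obtain k where "\<beta> = of_int k" by (auto elim: Ints_cases)
  then show ?thesis using True assms unfolding gam_def by simp
next
  case False
  then have "\<beta> \<noteq> of_int \<lfloor>\<beta>\<rfloor>"
    by (metis Ints_of_int)
  then have "\<lceil>\<beta>\<rceil> = \<lfloor>\<beta>\<rfloor> + 1"
    by (simp add: ceiling_altdef)
  moreover have "\<lfloor>\<beta>\<rfloor> \<ge> 1" using assms by linarith
  ultimately show ?thesis using False unfolding gam_def by simp
qed

lemma greedy_le_gam:
  fixes \<beta> :: real
  assumes "\<beta> > 1" "0 \<le> x" "x < 1"
  shows "greedy \<beta> x i \<le> gam \<beta>"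
proof -
  have "\<beta> * (Tb \<beta> ^^ i) x < \<beta>"
    using assms Tb_iter_range[OF assms(2,3)] by simp
  then have "(of_int \<lfloor>\<beta> * (Tb \<beta> ^^ i) x\<rfloor> :: real) < of_int \<lceil>\<beta>\<rceil>"
    using of_int_floor_le[of "\<beta> * (Tb \<beta> ^^ i) x"] le_of_int_ceiling[of \<beta>] by linarith
  then have "\<lfloor>\<beta> * (Tb \<beta> ^^ i) x\<rfloor> < \<lceil>\<beta>\<rceil>"
    by (simp only: of_int_less_iff)
  then show ?thesis
    unfolding greedy_def using gam_eq_ceiling[OF assms(1)] by linarith
qed

text \<open>The remainders of \<open>x \<le> y\<close> keep their distance \<open>\<beta>\<^sup>m (y - x)\<close> as long as the digits agree.\<close>

lemma digit_lex_mono: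
  fixes f :: "real \<Rightarrow> nat" and x y :: "nat \<Rightarrow> real"
  assumes "mono f" "\<beta> > 0" "x 0 \<le> y 0"
    and x: "\<And>n. x (Suc n) = \<beta> * x n - real (f (\<beta> * x n))"
    and y: "\<And>n. y (Suc n) = \<beta> * y n - real (f (\<beta> * y n))"
  shows "\<not> lex_less (\<lambda>n. f (\<beta> * y n)) (\<lambda>n. f (\<beta> * x n))"
proof
  assume "lex_less (\<lambda>n. f (\<beta> * y n)) (\<lambda>n. f (\<beta> * x n))"
  then obtain n where n: "\<forall>i<n. f (\<beta> * y i) = f (\<beta> * x i)" "f (\<beta> * y n) < f (\<beta> * x n)"
    unfolding lex_less_def by auto
  have dist: "y m - x m = \<beta> ^ m * (y 0 - x 0)" if "m \<le> n" for m
    using that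
  proof (induction m)
    case (Suc m)
    then have "f (\<beta> * y m) = f (\<beta> * x m)"
      using n(1) by simp
    then have "y (Suc m) - x (Suc m) = \<beta> * (y m - x m)"
      unfolding x y by (simp add: algebra_simps)
    then show ?case using Suc by simp
  qed simp
  have "0 \<le> \<beta> ^ n * (y 0 - x 0)"
    using assms(2,3) by simp
  then have "\<beta> * x n \<le> \<beta> * y n"
    using dist[of n] assms(2) by simp
  then have "f (\<beta> * x n) \<le> f (\<beta> * y n)"
    by (rule monoD[OF assms(1)])
  then show False using n(2) by simp
qed

lemma greedy_lex_mono:
  fixes \<beta> :: real
  assumes "\<beta> > 1" "0 \<le> x" "x \<le> y"
  shows "\<not> lex_less (greedy \<beta> y) (greedy \<beta> x)"
proof -
  have "mono (\<lambda>v::real. nat \<lfloor>v\<rfloor>)"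
    by (intro monoI nat_mono floor_mono)
  moreover have "(Tb \<beta> ^^ Suc n) z = \<beta> * (Tb \<beta> ^^ n) z - real (nat \<lfloor>\<beta> * (Tb \<beta> ^^ n) z\<rfloor>)"
    if "0 \<le> z" for z n
    using Tb_iter_Suc[OF assms(1) that] by (simp add: greedy_def)
  ultimately show ?thesis
    using digit_lex_mono[of "\<lambda>v. nat \<lfloor>v\<rfloor>" \<beta> "\<lambda>n. (Tb \<beta> ^^ n) x" "\<lambda>n. (Tb \<beta> ^^ n) y"] assms
    unfolding greedy_def by simp
qed

section \<open>The quasi-greedy expansion of 1\<close>

text \<open>The quasi-greedy algorithm: the digit \<open>\<lceil>\<beta> z\<rceil> - 1\<close> keeps every remainder in \<open>(0, 1]\<close>,
  so the resulting expansion of \<open>1\<close> is never eventually zero; it is \<open>\<alpha>(\<beta>)\<close>.\<close>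

fun qg_rem :: "real \<Rightarrow> real \<Rightarrow> nat \<Rightarrow> real" where
  "qg_rem \<beta> x 0 = x"
| "qg_rem \<beta> x (Suc n) = \<beta> * qg_rem \<beta> x n - of_int (\<lceil>\<beta> * qg_rem \<beta> x n\<rceil> - 1)"

definition qg_digit :: "real \<Rightarrow> real \<Rightarrow> nat \<Rightarrow> nat" where
  "qg_digit \<beta> x n = nat (\<lceil>\<beta> * qg_rem \<beta> x n\<rceil> - 1)"

lemma qg_rem_range: "0 < x \<Longrightarrow> x \<le> 1 \<Longrightarrow> 0 < qg_rem \<beta> x n \<and> qg_rem \<beta> x n \<le> 1"
  by (induction n) (auto simp: ceiling_correct)

context
  fixes \<beta> x :: real
  assumes \<beta>: "\<beta> > 1" and x: "0 < x" "x \<le> 1"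
begin

lemma qg_digit_real: "real (qg_digit \<beta> x n) = of_int (\<lceil>\<beta> * qg_rem \<beta> x n\<rceil> - 1)"
proof -
  have "0 < \<beta> * qg_rem \<beta> x n"
    using qg_rem_range[OF x] \<beta> by simp
  then show ?thesis
    unfolding qg_digit_def by (simp add: ceiling_le_zero not_le[symmetric])
qed

lemma qg_rem_Suc: "qg_rem \<beta> x (Suc n) = \<beta> * qg_rem \<beta> x n - real (qg_digit \<beta> x n)"
  using qg_digit_real by simp

lemma qg_digit_le_gam: "qg_digit \<beta> x n \<le> gam \<beta>"
proof -
  have "\<lceil>\<beta> * qg_rem \<beta> x n\<rceil> \<le> \<lceil>\<beta>\<rceil>"
    using qg_rem_range[OF x, of \<beta> n] \<beta> by (intro ceiling_mono) simp
  then show ?thesis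
    unfolding qg_digit_def using gam_eq_ceiling[OF \<beta>] by linarith
qed

lemma qg_partial_sum: "(\<Sum>i<n. real (qg_digit \<beta> x i) / \<beta> ^ Suc i) = x - qg_rem \<beta> x n / \<beta> ^ n"
proof (induction n)
  case (Suc n)
  have "qg_rem \<beta> x (Suc n) / \<beta> ^ Suc n = qg_rem \<beta> x n / \<beta> ^ n - real (qg_digit \<beta> x n) / \<beta> ^ Suc n"
    using qg_rem_Suc[of n] \<beta> by (simp add: field_simps)
  then show ?case using Suc by simp
qed simp

lemma piv_qg_digit: "piv \<beta> (qg_digit \<beta> x) = x"
proof -
  have "(\<lambda>n. qg_rem \<beta> x n / \<beta> ^ n) \<longlonglongrightarrow> 0"
  proof (rule Lim_null_comparison)
    show "\<forall>\<^sub>F n in sequentially. norm (qg_rem \<beta> x n / \<beta> ^ n) \<le> (1 / \<beta>) ^ n"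
    proof (intro always_eventually allI)
      fix n
      have "\<bar>qg_rem \<beta> x n\<bar> \<le> 1"
        using qg_rem_range[OF x, of \<beta> n] by simp
      then show "norm (qg_rem \<beta> x n / \<beta> ^ n) \<le> (1 / \<beta>) ^ n"
        using \<beta> by (simp add: power_one_over divide_right_mono)
    qed
    show "(\<lambda>n. (1 / \<beta>) ^ n) \<longlonglongrightarrow> 0"
      using \<beta> by (intro LIMSEQ_power_zero) simp
  qed
  then have "(\<lambda>n. x - qg_rem \<beta> x n / \<beta> ^ n) \<longlonglongrightarrow> x - 0"
    by (intro tendsto_diff tendsto_const)
  then have "(\<lambda>i. real (qg_digit \<beta> x i) / \<beta> ^ Suc i) sums x"
    unfolding sums_def qg_partial_sum by simp
  then show ?thesis
    unfolding piv_def by (rule sums_unique[symmetric])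
qed

lemma qg_digit_not_eventually_0: "\<exists>i\<ge>N. qg_digit \<beta> x i \<noteq> 0"
proof (rule ccontr)
  assume "\<not> ?thesis"
  then have zero: "qg_digit \<beta> x i = 0" if "i \<ge> N" for i
    using that by blast
  have grow: "qg_rem \<beta> x (N + k) = \<beta> ^ k * qg_rem \<beta> x N" for k
  proof (induction k)
    case (Suc k)
    then show ?case using qg_rem_Suc[of "N + k"] zero[of "N + k"] by simp
  qed simp
  obtain k where "1 / qg_rem \<beta> x N < \<beta> ^ k"
    using real_arch_pow[OF \<beta>] by blast
  then have "1 < \<beta> ^ k * qg_rem \<beta> x N"
    using qg_rem_range[OF x, of \<beta> N] by (simp add: field_simps)
  then show False using grow[of k] qg_rem_range[OF x, of \<beta> "N + k"] by linarith
qed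

end

lemma qg_digit_shiftk: "shiftk n (qg_digit \<beta> x) = qg_digit \<beta> (qg_rem \<beta> x n)"
proof -
  have "qg_rem \<beta> (qg_rem \<beta> x n) m = qg_rem \<beta> x (m + n)" for m
    by (induction m) auto
  then show ?thesis
    unfolding shiftk_def qg_digit_def by simp
qed

lemma qg_digit_lex_mono:
  fixes \<beta> :: real
  assumes "\<beta> > 1" "0 < x" "x \<le> y" "y \<le> 1"
  shows "\<not> lex_less (qg_digit \<beta> y) (qg_digit \<beta> x)"
proof -
  have "mono (\<lambda>v::real. nat (\<lceil>v\<rceil> - 1))"
    by (intro monoI nat_mono diff_right_mono ceiling_mono)
  moreover have "qg_rem \<beta> z (Suc n) = \<beta> * qg_rem \<beta> z n - real (nat (\<lceil>\<beta> * qg_rem \<beta> z n\<rceil> - 1))"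
    if "0 < z" "z \<le> 1" for z n
    using qg_rem_Suc[OF assms(1) that] by (simp add: qg_digit_def)
  ultimately show ?thesis
    using digit_lex_mono[of "\<lambda>v. nat (\<lceil>v\<rceil> - 1)" \<beta> "qg_rem \<beta> x" "qg_rem \<beta> y"] assms
    unfolding qg_digit_def by simp
qed

lemma qg_digit_1_lex_max:
  fixes \<beta> :: real
  assumes \<beta>: "\<beta> > 1" and w: "w \<in> quasi_greedy_cands \<beta>"
  shows "\<not> lex_less (qg_digit \<beta> 1) w"
proof
  assume "lex_less (qg_digit \<beta> 1) w"
  then obtain n where n: "\<forall>i<n. qg_digit \<beta> 1 i = w i" "qg_digit \<beta> 1 n < w n"
    unfolding lex_less_def by auto
  have wd: "\<forall>i. w i \<le> gam \<beta>" and wn: "\<forall>N. \<exists>i\<ge>N. w i \<noteq> 0" and w1: "piv \<beta> w = 1"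
    using w unfolding quasi_greedy_cands_def digit_seqs_def by auto
  have one: "(0::real) < 1" "(1::real) \<le> 1" by simp_all
  have "(\<Sum>i<n. real (w i) / \<beta> ^ Suc i) = 1 - qg_rem \<beta> 1 n / \<beta> ^ n"
    using n(1) qg_partial_sum[OF \<beta> one, of n] by simp
  moreover have "qg_rem \<beta> 1 n / \<beta> ^ n \<le> real (w n) / \<beta> ^ Suc n"
  proof -
    have "\<beta> * qg_rem \<beta> 1 n \<le> real (qg_digit \<beta> 1 n) + 1"
      using qg_digit_real[OF \<beta> one, of n] ceiling_correct[of "\<beta> * qg_rem \<beta> 1 n"] by simp
    also have "\<dots> \<le> real (w n)" using n(2) by simp
    finally show ?thesis using \<beta> by (simp add: field_simps)
  qed
  moreover have "0 < piv \<beta> (shiftk (Suc n) w) / \<beta> ^ Suc n"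
  proof -
    obtain i where "i \<ge> Suc n" "w i \<noteq> 0" using wn by blast
    then have "0 < piv \<beta> (shiftk (Suc n) w)"
      using wd \<beta> by (intro piv_pos[of _ _ "gam \<beta>" "i - Suc n"]) (auto simp: shiftk_def)
    then show ?thesis using \<beta> by simp
  qed
  ultimately have "1 < piv \<beta> w"
    using piv_split[OF \<beta> wd, of "Suc n"] by (simp del: power_Suc)
  then show False using w1 by simp
qed

lemma alpha_eq_qg_digit:
  fixes \<beta> :: real
  assumes "\<beta> > 1"
  shows "alpha \<beta> = qg_digit \<beta> 1"
  unfolding alpha_def
proof (rule the_equality)
  have "qg_digit \<beta> 1 \<in> quasi_greedy_cands \<beta>"
    unfolding quasi_greedy_cands_def digit_seqs_def
    using qg_digit_le_gam qg_digit_not_eventually_0 piv_qg_digit assms by auto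
  then show "qg_digit \<beta> 1 \<in> quasi_greedy_cands \<beta> \<and>
      (\<forall>b\<in>quasi_greedy_cands \<beta>. \<not> lex_less (qg_digit \<beta> 1) b)"
    using qg_digit_1_lex_max[OF assms] by blast
  then show "a = qg_digit \<beta> 1"
    if "a \<in> quasi_greedy_cands \<beta> \<and> (\<forall>b\<in>quasi_greedy_cands \<beta>. \<not> lex_less a b)" for a
    using that lex_less_linear by blast
qed

context
  fixes \<beta> :: real
  assumes \<beta>: "\<beta> > 1"
begin

lemma alpha_in_cands: "alpha \<beta> \<in> quasi_greedy_cands \<beta>"
  unfolding alpha_eq_qg_digit[OF \<beta>] quasi_greedy_cands_def digit_seqs_def
  using qg_digit_le_gam qg_digit_not_eventually_0 piv_qg_digit \<beta> by auto

lemma piv_alpha: "piv \<beta> (alpha \<beta>) = 1"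
  using alpha_in_cands unfolding quasi_greedy_cands_def by auto

lemma alpha_le_gam: "alpha \<beta> i \<le> gam \<beta>"
  using alpha_in_cands unfolding quasi_greedy_cands_def digit_seqs_def by auto

lemma alpha_not_eventually_0: "\<exists>i\<ge>N. alpha \<beta> i \<noteq> 0"
  using alpha_in_cands unfolding quasi_greedy_cands_def by auto

lemma alpha_0: "alpha \<beta> 0 = gam \<beta>"
  using gam_eq_ceiling[OF \<beta>] unfolding alpha_eq_qg_digit[OF \<beta>] qg_digit_def by simp

lemma alpha_lex_max_shiftk: "\<not> lex_less (alpha \<beta>) (shiftk n (alpha \<beta>))"
  using qg_digit_lex_mono[OF \<beta>, of "qg_rem \<beta> 1 n" 1] qg_rem_range[of 1 \<beta> n]
  by (simp add: alpha_eq_qg_digit[OF \<beta>] qg_digit_shiftk)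

lemma zero_lex_less_alpha: "lex_less (\<lambda>_. 0) (alpha \<beta>)"
  using alpha_not_eventually_0[of 0] by (intro zero_lex_less) auto

end

section \<open>Parry's characterisation of greedy expansions\<close>

lemma Sigma_b_digits: "w \<in> Sigma_b \<beta> \<Longrightarrow> \<forall>i. w i \<le> gam \<beta>"
  unfolding Sigma_b_def digit_seqs_def by auto

lemma Sigma_b_shiftk: "w \<in> Sigma_b \<beta> \<Longrightarrow> shiftk k w \<in> Sigma_b \<beta>"
  unfolding Sigma_b_def digit_seqs_def by (auto simp: shiftk_shiftk) (simp add: shiftk_def)

context
  fixes \<beta> :: real
  assumes \<beta>: "\<beta> > 1"
begin

lemma Sigma_b_piv_step:
  assumes w: "w \<in> Sigma_b \<beta>"
  obtains n where "piv \<beta> w - 1 < (piv \<beta> (shiftk (Suc n) w) - 1) / \<beta> ^ Suc n"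
proof -
  have "lex_less (shiftk 0 w) (alpha \<beta>)"
    using w unfolding Sigma_b_def by blast
  then obtain n where n: "\<forall>i<n. w i = alpha \<beta> i" "w n < alpha \<beta> n"
    unfolding lex_less_def by auto
  have wd: "\<forall>i. w i \<le> gam \<beta>" and ad: "\<forall>i. alpha \<beta> i \<le> gam \<beta>"
    using Sigma_b_digits[OF w] alpha_le_gam[OF \<beta>] by auto
  have "real (w n) + 1 \<le> real (alpha \<beta> n)"
    using n(2) by linarith
  then have "(real (w n) + 1) / \<beta> ^ Suc n \<le> real (alpha \<beta> n) / \<beta> ^ Suc n"
    using \<beta> by (intro divide_right_mono) auto
  moreover have "(\<Sum>i<n. real (w i) / \<beta> ^ Suc i) = (\<Sum>i<n. real (alpha \<beta> i) / \<beta> ^ Suc i)"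
    using n(1) by (intro sum.cong) auto
  ultimately have "(\<Sum>i<Suc n. real (w i) / \<beta> ^ Suc i) + 1 / \<beta> ^ Suc n
      \<le> (\<Sum>i<Suc n. real (alpha \<beta> i) / \<beta> ^ Suc i)"
    unfolding sum.lessThan_Suc add_divide_distrib by linarith
  moreover have "0 < piv \<beta> (shiftk (Suc n) (alpha \<beta>)) / \<beta> ^ Suc n"
  proof -
    obtain i where "i \<ge> Suc n" "alpha \<beta> i \<noteq> 0"
      using alpha_not_eventually_0[OF \<beta>] by blast
    then have "0 < piv \<beta> (shiftk (Suc n) (alpha \<beta>))"
      using ad \<beta> by (intro piv_pos[of _ _ "gam \<beta>" "i - Suc n"]) (auto simp: shiftk_def)
    then show ?thesis using \<beta> by simp
  qed
  ultimately have "piv \<beta> w - 1 < piv \<beta> (shiftk (Suc n) w) / \<beta> ^ Suc n - 1 / \<beta> ^ Suc n"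
    using piv_split[OF \<beta> wd, of "Suc n"] piv_split[OF \<beta> ad, of "Suc n"] piv_alpha[OF \<beta>]
    by linarith
  then show thesis
    by (intro that[of n]) (simp add: diff_divide_distrib)
qed

lemma Sigma_b_piv_le_1:
  assumes w: "w \<in> Sigma_b \<beta>"
  shows "piv \<beta> w \<le> 1"
proof -
  define C where "C = piv \<beta> (\<lambda>_. gam \<beta>)"
  have C: "0 \<le> C" unfolding C_def using \<beta> by (intro piv_nonneg) auto
  have bound: "piv \<beta> w - 1 \<le> C / \<beta> ^ N" if "w \<in> Sigma_b \<beta>" for w N
    using that
  proof (induction N arbitrary: w)
    case 0
    have "piv \<beta> w \<le> C"
      unfolding C_def using Sigma_b_digits[OF 0] by (intro piv_mono[OF \<beta>, of _ "gam \<beta>"]) auto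
    then show ?case by simp
  next
    case (Suc N)
    obtain n where n: "piv \<beta> w - 1 < (piv \<beta> (shiftk (Suc n) w) - 1) / \<beta> ^ Suc n"
      using Sigma_b_piv_step[OF Suc.prems] by blast
    have "(piv \<beta> (shiftk (Suc n) w) - 1) / \<beta> ^ Suc n \<le> (C / \<beta> ^ N) / \<beta> ^ Suc n"
      using Suc.IH[OF Sigma_b_shiftk[OF Suc.prems, of "Suc n"]] \<beta> by (intro divide_right_mono) auto
    also have "\<dots> \<le> (C / \<beta> ^ N) / \<beta>"
      using C \<beta> by (intro divide_left_mono) (auto simp: power_increasing[of 1, simplified])
    finally show ?case using n by (simp add: field_simps)
  qed
  show ?thesis
  proof (rule ccontr)
    assume gt: "\<not> ?thesis"
    obtain N where "C / (piv \<beta> w - 1) < \<beta> ^ N"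
      using real_arch_pow[OF \<beta>] by blast
    then have "C / \<beta> ^ N < piv \<beta> w - 1"
      using gt \<beta> by (simp add: field_simps)
    then show False using bound[OF w, of N] by simp
  qed
qed

lemma Sigma_b_piv_range:
  assumes w: "w \<in> Sigma_b \<beta>"
  shows "0 \<le> piv \<beta> w \<and> piv \<beta> w < 1"
proof -
  obtain n where "piv \<beta> w - 1 < (piv \<beta> (shiftk (Suc n) w) - 1) / \<beta> ^ Suc n"
    using Sigma_b_piv_step[OF w] by blast
  moreover have "(piv \<beta> (shiftk (Suc n) w) - 1) / \<beta> ^ Suc n \<le> 0"
    using Sigma_b_piv_le_1[OF Sigma_b_shiftk[OF w]] \<beta> by (simp add: divide_nonpos_pos)
  ultimately show ?thesis
    using piv_nonneg[OF \<beta> Sigma_b_digits[OF w]] by simp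
qed

lemma Sigma_b_Tb_piv:
  assumes w: "w \<in> Sigma_b \<beta>"
  shows "\<lfloor>\<beta> * piv \<beta> w\<rfloor> = int (w 0)" "Tb \<beta> (piv \<beta> w) = piv \<beta> (shiftk 1 w)"
proof -
  have "\<beta> * piv \<beta> w = real (w 0) + piv \<beta> (shiftk 1 w)"
    by (rule piv_split1[OF \<beta> Sigma_b_digits[OF w]])
  moreover have "0 \<le> piv \<beta> (shiftk 1 w)" "piv \<beta> (shiftk 1 w) < 1"
    using Sigma_b_piv_range[OF Sigma_b_shiftk[OF w]] by auto
  ultimately show "\<lfloor>\<beta> * piv \<beta> w\<rfloor> = int (w 0)" "Tb \<beta> (piv \<beta> w) = piv \<beta> (shiftk 1 w)"
    by (simp_all add: Tb_def floor_eq_iff)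
qed

lemma Sigma_b_Tb_iter_piv: "w \<in> Sigma_b \<beta> \<Longrightarrow> (Tb \<beta> ^^ k) (piv \<beta> w) = piv \<beta> (shiftk k w)"
  by (induction k) (simp_all add: Sigma_b_Tb_piv(2) Sigma_b_shiftk shiftk_shiftk)

lemma greedy_piv_Sigma_b:
  assumes w: "w \<in> Sigma_b \<beta>"
  shows "greedy \<beta> (piv \<beta> w) = w"
proof
  fix k
  have "greedy \<beta> (piv \<beta> w) k = nat \<lfloor>\<beta> * piv \<beta> (shiftk k w)\<rfloor>"
    unfolding greedy_def Sigma_b_Tb_iter_piv[OF w] ..
  also have "\<dots> = w k"
    using Sigma_b_Tb_piv(1)[OF Sigma_b_shiftk[OF w]] by (simp add: shiftk_def)
  finally show "greedy \<beta> (piv \<beta> w) k = w k" .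
qed

lemma less_piv_if_greedy_lex_less:
  assumes w: "w \<in> Sigma_b \<beta>" and "0 \<le> r" "lex_less (greedy \<beta> r) w"
  shows "r < piv \<beta> w"
proof (rule ccontr)
  assume "\<not> r < piv \<beta> w"
  then have "\<not> lex_less (greedy \<beta> r) (greedy \<beta> (piv \<beta> w))"
    using greedy_lex_mono[OF \<beta>, of "piv \<beta> w" r] Sigma_b_piv_range[OF w] by simp
  then show False
    using greedy_piv_Sigma_b[OF w] assms(3) by simp
qed

lemma piv_strict_mono_Sigma_b:
  assumes u: "u \<in> Sigma_b \<beta>" and w: "w \<in> Sigma_b \<beta>" and "lex_less u w"
  shows "piv \<beta> u < piv \<beta> w"
proof -
  have "lex_less (greedy \<beta> (piv \<beta> u)) w"
    using greedy_piv_Sigma_b[OF u] assms(3) by simp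
  then show ?thesis
    using less_piv_if_greedy_lex_less[OF w] Sigma_b_piv_range[OF u] by blast
qed

end

section \<open>Self-minimal points\<close>

definition self_minimal :: "real \<Rightarrow> real \<Rightarrow> bool" where
  "self_minimal \<beta> y \<longleftrightarrow> 0 < y \<and> y < 1 \<and> (\<forall>k. (Tb \<beta> ^^ k) y = 0 \<or> y \<le> (Tb \<beta> ^^ k) y)"

lemma self_minimalD:
  assumes "self_minimal \<beta> y"
  shows "0 < y" "y < 1" "(Tb \<beta> ^^ k) y \<noteq> 0 \<Longrightarrow> y \<le> (Tb \<beta> ^^ k) y"
  using assms unfolding self_minimal_def by auto

definition lex_min_shifts :: "(nat \<Rightarrow> nat) \<Rightarrow> bool" where
  "lex_min_shifts x \<longleftrightarrow> (\<forall>k. shiftk k x = (\<lambda>_. 0) \<or> \<not> lex_less (shiftk k x) x)"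

lemma lex_min_shifts_greedy:
  fixes \<beta> :: real
  assumes \<beta>: "\<beta> > 1" and r: "self_minimal \<beta> r"
  shows "lex_min_shifts (greedy \<beta> r)"
  unfolding lex_min_shifts_def greedy_shiftk
proof
  fix k
  have "0 \<le> r" and "(Tb \<beta> ^^ k) r = 0 \<or> r \<le> (Tb \<beta> ^^ k) r"
    using r unfolding self_minimal_def by auto
  then show "greedy \<beta> ((Tb \<beta> ^^ k) r) = (\<lambda>_. 0) \<or> \<not> lex_less (greedy \<beta> ((Tb \<beta> ^^ k) r)) (greedy \<beta> r)"
    using greedy_lex_mono[OF \<beta>] greedy_0 by metis
qed

lemma self_minimal_piv:
  fixes \<beta> :: real
  assumes \<beta>: "\<beta> > 1" and w: "w \<in> Sigma_b \<beta>" "w \<noteq> (\<lambda>_. 0)" "lex_min_shifts w"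
  shows "self_minimal \<beta> (piv \<beta> w)"
  unfolding self_minimal_def
proof (intro conjI allI)
  obtain i where "w i \<noteq> 0" using w(2) by auto
  then show "0 < piv \<beta> w"
    using piv_pos[OF \<beta> Sigma_b_digits[OF w(1)]] by blast
  show "piv \<beta> w < 1"
    using Sigma_b_piv_range[OF \<beta> w(1)] by simp
  fix k
  have "shiftk k w = (\<lambda>_. 0) \<or> lex_less w (shiftk k w) \<or> shiftk k w = w"
    using w(3) lex_less_linear unfolding lex_min_shifts_def by blast
  then have "piv \<beta> (shiftk k w) = 0 \<or> piv \<beta> w \<le> piv \<beta> (shiftk k w)"
    using piv_strict_mono_Sigma_b[OF \<beta> w(1) Sigma_b_shiftk[OF w(1), of k]] by (auto simp: piv_def)
  then show "(Tb \<beta> ^^ k) (piv \<beta> w) = 0 \<or> piv \<beta> w \<le> (Tb \<beta> ^^ k) (piv \<beta> w)"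
    unfolding Sigma_b_Tb_iter_piv[OF \<beta> w(1)] .
qed

lemma self_minimal_piv_above:
  fixes \<beta> :: real
  assumes \<beta>: "\<beta> > 1" and q: "q \<in> Sigma_b \<beta>" "lex_min_shifts q"
    and r: "0 \<le> r" "lex_less (greedy \<beta> r) q"
  shows "self_minimal \<beta> (piv \<beta> q) \<and> r < piv \<beta> q"
proof
  have "q \<noteq> (\<lambda>_. 0)"
    using r(2) not_lex_less_zero by auto
  then show "self_minimal \<beta> (piv \<beta> q)"
    by (rule self_minimal_piv[OF \<beta> q(1) _ q(2)])
  show "r < piv \<beta> q"
    by (rule less_piv_if_greedy_lex_less[OF \<beta> q(1) r])
qed

section \<open>The algorithm defining \<open>r\<^sup>*\<close>\<close>

definition rstep_index :: "real \<Rightarrow> (nat \<Rightarrow> nat) \<Rightarrow> nat" where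
  "rstep_index \<beta> x = (LEAST k. \<not> lex_less (shiftk k x) (alpha \<beta>))"

lemma rstep_eq:
  "rstep \<beta> x = (\<lambda>i. if i + 1 < rstep_index \<beta> x then x i
                     else if i + 1 = rstep_index \<beta> x then x i + 1 else 0)"
  unfolding rstep_def rstep_index_def Let_def ..

context
  fixes \<beta> :: real and x :: "nat \<Rightarrow> nat"
  assumes \<beta>: "\<beta> > 1" and x_less: "lex_less x (alpha \<beta>)" and x_notin: "x \<notin> Sigma_b \<beta>"
    and x_min: "lex_min_shifts x"
begin

lemma rstep_index:
  "\<not> lex_less (shiftk (rstep_index \<beta> x) x) (alpha \<beta>)"
  "k < rstep_index \<beta> x \<Longrightarrow> lex_less (shiftk k x) (alpha \<beta>)"
  "1 \<le> rstep_index \<beta> x"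
proof -
  have "\<exists>k. \<not> lex_less (shiftk k x) (alpha \<beta>)"
  proof (rule ccontr)
    assume "\<not> ?thesis"
    then have below: "lex_less (shiftk k x) (alpha \<beta>)" for k by blast
    have "x i \<le> gam \<beta>" for i
    proof (rule ccontr)
      assume "\<not> x i \<le> gam \<beta>"
      then have "lex_less (alpha \<beta>) (shiftk i x)"
        using alpha_0[OF \<beta>] by (intro lex_lessI[of 0]) (auto simp: shiftk_def)
      then show False using below[of i] lex_less_asym by blast
    qed
    then show False using x_notin below unfolding Sigma_b_def digit_seqs_def by blast
  qed
  then show at_index: "\<not> lex_less (shiftk (rstep_index \<beta> x) x) (alpha \<beta>)"
    unfolding rstep_index_def by (rule LeastI_ex)
  show "k < rstep_index \<beta> x \<Longrightarrow> lex_less (shiftk k x) (alpha \<beta>)"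
    unfolding rstep_index_def using not_less_Least by blast
  show "1 \<le> rstep_index \<beta> x"
    using at_index x_less by (cases "rstep_index \<beta> x") auto
qed

lemma shiftk_rstep_index_nonzero: "shiftk (rstep_index \<beta> x) x \<noteq> (\<lambda>_. 0)"
  using rstep_index(1) zero_lex_less_alpha[OF \<beta>] by auto

lemma rstep_index_less:
  assumes "\<forall>i\<ge>L. x i = 0"
  shows "rstep_index \<beta> x < L"
proof (rule ccontr)
  assume "\<not> ?thesis"
  then have "shiftk (rstep_index \<beta> x) x = (\<lambda>_. 0)"
    using assms by (auto simp: shiftk_def)
  then show False using shiftk_rstep_index_nonzero by contradiction
qed

lemma lex_less_rstep: "lex_less x (rstep \<beta> x)"
  using rstep_index(3) by (intro lex_lessI[of "rstep_index \<beta> x - 1"]) (auto simp: rstep_eq)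

lemma rstep_lex_less_alpha: "lex_less (rstep \<beta> x) (alpha \<beta>)"
proof -
  define j where "j = rstep_index \<beta> x"
  obtain n where n: "\<forall>i<n. x i = alpha \<beta> i" "x n < alpha \<beta> n"
    using x_less unfolding lex_less_def by auto
  have "n < j"
  proof (rule ccontr)
    assume "\<not> n < j"
    then have "lex_less (shiftk j x) (shiftk j (alpha \<beta>))"
      using n by (intro lex_lessI[of "n - j"]) (auto simp: shiftk_def)
    moreover have "lex_less (shiftk j (alpha \<beta>)) (alpha \<beta>) \<or> shiftk j (alpha \<beta>) = alpha \<beta>"
      using alpha_lex_max_shiftk[OF \<beta>] lex_less_linear by blast
    ultimately have "lex_less (shiftk j x) (alpha \<beta>)"
      using lex_less_trans by auto
    then show False using rstep_index(1) unfolding j_def by contradiction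
  qed
  show ?thesis
  proof (cases "n + 1 = j \<and> x n + 1 = alpha \<beta> n")
    case True
    have "\<forall>i<j. rstep \<beta> x i = alpha \<beta> i"
    proof (intro allI impI)
      fix i assume "i < j"
      then have "i < n \<or> i = n" using True by linarith
      then show "rstep \<beta> x i = alpha \<beta> i" using True n(1) by (auto simp: rstep_eq j_def)
    qed
    moreover have "\<forall>i\<ge>j. rstep \<beta> x i = 0"
      by (simp add: rstep_eq j_def)
    ultimately show ?thesis
      using lex_less_zero_tail alpha_not_eventually_0[OF \<beta>] by blast
  next
    case False
    then show ?thesis
      using n \<open>n < j\<close> by (intro lex_lessI[of n]) (auto simp: rstep_eq j_def)
  qed
qed

text \<open>For \<open>0 < k < j\<close>, shifting by \<open>k\<close> moves the incremented digit at position \<open>j - 1\<close> to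
  position \<open>j - 1 - k\<close>, where the unshifted sequence still agrees with \<open>x\<close>.\<close>

lemma lex_min_shifts_rstep: "lex_min_shifts (rstep \<beta> x)"
  unfolding lex_min_shifts_def
proof
  fix k
  define j where "j = rstep_index \<beta> x"
  define y where "y = rstep \<beta> x"
  consider "k = 0" | "j \<le> k" | "0 < k" "k < j" by linarith
  then show "shiftk k y = (\<lambda>_. 0) \<or> \<not> lex_less (shiftk k y) y"
  proof cases
    case 1
    then show ?thesis using lex_less_irrefl by simp
  next
    case 2
    then show ?thesis by (auto simp: shiftk_def y_def rstep_eq j_def)
  next
    case 3
    have "shiftk k x \<noteq> (\<lambda>_. 0)"
    proof
      assume "shiftk k x = (\<lambda>_. 0)"
      then have "shiftk (j - k) (shiftk k x) = (\<lambda>_. 0)"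
        by (simp add: shiftk_def)
      then show False
        using shiftk_rstep_index_nonzero 3 by (simp add: shiftk_shiftk j_def)
    qed
    then have "\<not> lex_less (shiftk k x) x"
      using x_min unfolding lex_min_shifts_def by blast
    then have "lex_less y (shiftk k y)"
      using 3 by (intro lex_less_bump[where N = "j - 1 - k"]) (auto simp: shiftk_def y_def rstep_eq j_def)
    then show ?thesis using lex_less_asym by blast
  qed
qed

end

lemma funpow_invariant_until:
  assumes "P x" "\<And>y. P y \<Longrightarrow> \<not> S y \<Longrightarrow> P (f y)" "\<forall>k<n. \<not> S ((f ^^ k) x)"
  shows "P ((f ^^ n) x)"
  using assms(3) by (induction n) (auto intro: assms(1,2))

context
  fixes \<beta> :: real
  assumes \<beta>: "\<beta> > 1"
begin

text \<open>Termination: after one step the sequence vanishes from position \<open>j\<close> on, and every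
  further step works at a strictly smaller index.\<close>

lemma rstep_reaches_Sigma_b:
  assumes "lex_less x (alpha \<beta>)" "lex_min_shifts x"
  shows "\<exists>n. (rstep \<beta> ^^ n) x \<in> Sigma_b \<beta>"
proof -
  have finite_support: "\<exists>n. (rstep \<beta> ^^ n) x \<in> Sigma_b \<beta>"
    if "\<forall>i\<ge>L. x i = 0" "lex_less x (alpha \<beta>)" "lex_min_shifts x" for L x
    using that
  proof (induction L arbitrary: x rule: less_induct)
    case (less L)
    show ?case
    proof (cases "x \<in> Sigma_b \<beta>")
      case False
      have "\<forall>i\<ge>rstep_index \<beta> x. rstep \<beta> x i = 0"
        by (simp add: rstep_eq)
      then obtain n where "(rstep \<beta> ^^ n) (rstep \<beta> x) \<in> Sigma_b \<beta>"
        using less.IH[OF rstep_index_less] less.prems False \<beta>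
          rstep_lex_less_alpha lex_min_shifts_rstep by blast
      then show ?thesis
        by (metis funpow_Suc_right o_apply)
    qed (metis funpow_0)
  qed
  show ?thesis
  proof (cases "x \<in> Sigma_b \<beta>")
    case False
    have "\<forall>i\<ge>rstep_index \<beta> x. rstep \<beta> x i = 0"
      by (simp add: rstep_eq)
    then obtain n where "(rstep \<beta> ^^ n) (rstep \<beta> x) \<in> Sigma_b \<beta>"
      using finite_support assms False \<beta> rstep_lex_less_alpha lex_min_shifts_rstep by blast
    then show ?thesis
      by (metis funpow_Suc_right o_apply)
  qed (metis funpow_0)
qed

lemma rstep_limit:
  assumes "lex_less x (alpha \<beta>)" "lex_min_shifts x" "lex_less w x"
  defines "q \<equiv> (rstep \<beta> ^^ (LEAST n. (rstep \<beta> ^^ n) x \<in> Sigma_b \<beta>)) x"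
  shows "q \<in> Sigma_b \<beta>" "lex_min_shifts q" "lex_less w q"
proof -
  show "q \<in> Sigma_b \<beta>"
    unfolding q_def using rstep_reaches_Sigma_b[OF assms(1,2)] by (rule LeastI_ex)
  have "lex_less y (alpha \<beta>) \<and> lex_min_shifts y \<and> lex_less w y"
    if "y = q" for y
    unfolding that q_def
  proof (rule funpow_invariant_until[where S = "\<lambda>y. y \<in> Sigma_b \<beta>"])
    show "lex_less x (alpha \<beta>) \<and> lex_min_shifts x \<and> lex_less w x"
      using assms(1-3) by blast
    show "\<forall>k<(LEAST n. (rstep \<beta> ^^ n) x \<in> Sigma_b \<beta>). (rstep \<beta> ^^ k) x \<notin> Sigma_b \<beta>"
      using not_less_Least by blast
  qed (use \<beta> rstep_lex_less_alpha lex_min_shifts_rstep lex_less_rstep lex_less_trans in blast)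
  then show "lex_min_shifts q" "lex_less w q" by blast+
qed

end

lemma blen_eqI:
  assumes "1 \<le> m" "greedy \<beta> r (m - 1) \<noteq> 0" "\<forall>i\<ge>m. greedy \<beta> r i = 0"
  shows "blen \<beta> r = m"
  unfolding blen_def
proof (rule Least_equality)
  show "\<forall>i\<ge>m. greedy \<beta> r i = 0" by (rule assms(3))
  show "m \<le> L" if "\<forall>i\<ge>L. greedy \<beta> r i = 0" for L
  proof (rule ccontr)
    assume "\<not> m \<le> L"
    then have "greedy \<beta> r (m - 1) = 0" using that by simp
    then show False using assms(2) by contradiction
  qed
qed

lemma beta_rat_blen:
  assumes "r \<in> beta_rat \<beta>"
  shows "1 \<le> blen \<beta> r" "greedy \<beta> r (blen \<beta> r - 1) \<noteq> 0" "\<forall>i\<ge>blen \<beta> r. greedy \<beta> r i = 0"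
  using assms blen_eqI[of _ \<beta> r] unfolding beta_rat_def by auto

context
  fixes w :: "nat \<Rightarrow> nat" and m :: nat
  assumes w_min: "lex_min_shifts w" and m: "0 < m" and w_last: "w (m - 1) \<noteq> 0"
    and w_zero: "\<forall>i\<ge>m. w i = 0"
begin

lemma periodic_lex_le_shiftk: "\<not> lex_less (shiftk k (\<lambda>i. w (i mod m))) (\<lambda>i. w (i mod m))"
proof -
  define p where "p = (\<lambda>i. w (i mod m))"
  define k' where "k' = k mod m"
  have p_w: "p i = w i" if "i < m" for i
    using that by (simp add: p_def)
  have "shiftk k p = shiftk k' p"
    unfolding p_def shiftk_def k'_def by (simp add: mod_add_right_eq)
  moreover have "lex_less p (shiftk k' p)" if "k' \<noteq> 0"
  proof -
    have "k' < m" unfolding k'_def using m by simp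
    then have "shiftk k' w \<noteq> (\<lambda>_. 0)"
      using w_last by (auto simp: shiftk_def fun_eq_iff intro: exI[of _ "m - 1 - k'"])
    moreover have "shiftk k' w \<noteq> w"
      using w_last w_zero \<open>k' \<noteq> 0\<close> by (auto simp: shiftk_def fun_eq_iff intro!: exI[of _ "m - 1"])
    ultimately have "lex_less w (shiftk k' w)"
      using w_min lex_less_linear unfolding lex_min_shifts_def by blast
    then obtain n where n: "\<forall>i<n. w i = w (i + k')" "w n < w (n + k')"
      unfolding lex_less_def shiftk_def by auto
    have "n + k' < m"
    proof (rule ccontr)
      assume "\<not> n + k' < m"
      then show False using w_zero n(2) by simp
    qed
    then show ?thesis
      using n p_w by (intro lex_lessI[of n]) (auto simp: shiftk_def)
  qed
  ultimately show ?thesis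
    unfolding p_def[symmetric] using lex_less_irrefl lex_less_asym by (cases "k' = 0") auto
qed

lemma lex_less_periodic: "lex_less w (\<lambda>i. w (i mod m))"
proof (rule lex_less_zero_tail[where j = m])
  have "(m + (m - 1)) mod m = m - 1"
    unfolding mod_add_self1 using m by simp
  then show "\<exists>i\<ge>m. w (i mod m) \<noteq> 0"
    using w_last by (intro exI[of _ "m + (m - 1)"]) simp
qed (use w_zero in auto)

end

lemma perw_props:
  fixes \<beta> r :: real
  assumes \<beta>: "\<beta> > 1" and r: "r \<in> beta_rat \<beta>" "self_minimal \<beta> r"
  shows "lex_min_shifts (perw \<beta> r)" "lex_less (greedy \<beta> r) (perw \<beta> r)"
    "perw \<beta> r 0 = greedy \<beta> r 0"
proof -
  have "lex_min_shifts (greedy \<beta> r)"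
    by (rule lex_min_shifts_greedy[OF \<beta> r(2)])
  note periodic = periodic_lex_le_shiftk[OF this] lex_less_periodic[OF this]
  show "lex_min_shifts (perw \<beta> r)" "lex_less (greedy \<beta> r) (perw \<beta> r)"
    using periodic beta_rat_blen[OF r(1)] unfolding perw_def lex_min_shifts_def by auto
  show "perw \<beta> r 0 = greedy \<beta> r 0"
    using beta_rat_blen(1)[OF r(1)] by (simp add: perw_def)
qed

lemma rstar_cases:
  fixes \<beta> r :: real
  assumes \<beta>: "\<beta> > 1" and r: "r \<in> beta_rat \<beta>" "self_minimal \<beta> r"
  shows "rstar \<beta> r = 1 \<or> (self_minimal \<beta> (rstar \<beta> r) \<and> r < rstar \<beta> r)"
proof -
  define p where "p = perw \<beta> r"
  have r01: "0 \<le> r" "r < 1"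
    using self_minimalD[OF r(2)] by auto
  note p = perw_props[OF assms, folded p_def]
  consider "p \<in> Sigma_b \<beta>" | "p \<notin> Sigma_b \<beta>" "greedy \<beta> r 0 = gam \<beta>"
    | "p \<notin> Sigma_b \<beta>" "greedy \<beta> r 0 \<noteq> gam \<beta>"
    by blast
  then show ?thesis
  proof cases
    case 1
    then have "rstar \<beta> r = piv \<beta> p"
      by (simp add: rstar_def p_def)
    then show ?thesis
      using self_minimal_piv_above[OF \<beta> 1 p(1) r01(1) p(2)] by simp
  next
    case 2
    then have "rstar \<beta> r = piv \<beta> (alpha \<beta>)"
      by (simp add: rstar_def p_def)
    then show ?thesis
      using piv_alpha[OF \<beta>] by simp
  next
    case 3
    then have rs: "rstar \<beta> r = piv \<beta> ((rstep \<beta> ^^ (LEAST n. (rstep \<beta> ^^ n) p \<in> Sigma_b \<beta>)) p)"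
      by (simp add: rstar_def p_def)
    have "lex_less p (alpha \<beta>)"
      using 3 p(3) greedy_le_gam[OF \<beta> r01] alpha_0[OF \<beta>] by (intro lex_lessI[of 0]) (auto simp: le_less)
    note q = rstep_limit[OF \<beta> this p(1,2)]
    show ?thesis
      unfolding rs using self_minimal_piv_above[OF \<beta> q(1,2) r01(1) q(3)] by simp
  qed
qed

section \<open>Perturbing orbits\<close>

lemma Tb_add:
  assumes "0 \<le> Tb \<beta> z + \<beta> * e" "Tb \<beta> z + \<beta> * e < 1"
  shows "Tb \<beta> (z + e) = Tb \<beta> z + \<beta> * e"
proof -
  have split: "\<beta> * (z + e) = of_int \<lfloor>\<beta> * z\<rfloor> + (Tb \<beta> z + \<beta> * e)"
    by (simp add: Tb_def algebra_simps)
  then have "\<lfloor>\<beta> * (z + e)\<rfloor> = \<lfloor>\<beta> * z\<rfloor>"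
    using assms by (intro floor_unique) simp_all
  then show ?thesis
    using split by (simp add: Tb_def)
qed

lemma Tb_add_eq_0:
  assumes "Tb \<beta> z + \<beta> * e = 1"
  shows "Tb \<beta> (z + e) = 0"
proof -
  have "\<beta> * (z + e) = of_int (\<lfloor>\<beta> * z\<rfloor> + 1)"
    using assms by (simp add: Tb_def algebra_simps)
  then show ?thesis
    by (simp add: Tb_def)
qed

lemma Tb_iter_add:
  assumes "\<And>i. i < k \<Longrightarrow> 0 \<le> (Tb \<beta> ^^ Suc i) a + \<beta> ^ Suc i * e \<and> (Tb \<beta> ^^ Suc i) a + \<beta> ^ Suc i * e < 1"
  shows "(Tb \<beta> ^^ k) (a + e) = (Tb \<beta> ^^ k) a + \<beta> ^ k * e"
  using assms
proof (induction k)
  case (Suc k)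
  then have "(Tb \<beta> ^^ Suc k) (a + e) = Tb \<beta> ((Tb \<beta> ^^ k) a + \<beta> ^ k * e)"
    by simp
  also have "\<dots> = (Tb \<beta> ^^ Suc k) a + \<beta> ^ Suc k * e"
    using Suc.prems[of k] by (subst Tb_add) (simp_all add: mult.assoc)
  finally show ?case .
qed simp

lemma self_minimal_inverse_power:
  fixes \<beta> :: real
  assumes \<beta>: "\<beta> > 1"
  shows "self_minimal \<beta> (1 / \<beta> ^ Suc n)"
proof -
  define e where "e = 1 / \<beta> ^ Suc n"
  have "1 < \<beta> ^ Suc n"
    using \<beta> by (intro one_less_power) simp_all
  then have e: "0 < e" "e < 1"
    unfolding e_def by simp_all
  have power_e: "\<beta> ^ k * e = 1 / \<beta> ^ (Suc n - k)" if "k \<le> Suc n" for k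
    using that \<beta> by (simp add: e_def power_diff)
  have orbit: "(Tb \<beta> ^^ k) e = \<beta> ^ k * e" if "k \<le> n" for k
  proof -
    have "\<beta> ^ Suc i * e < 1" if "i < k" for i
      using power_e[of "Suc i"] \<open>k \<le> n\<close> that \<beta> by (simp add: one_less_power)
    then have "(Tb \<beta> ^^ k) (0 + e) = (Tb \<beta> ^^ k) 0 + \<beta> ^ k * e"
      using e \<beta> by (intro Tb_iter_add) (simp add: Tb_iter_0 Tb_def)
    then show ?thesis by (simp add: Tb_iter_0)
  qed
  have "(Tb \<beta> ^^ Suc n) e = Tb \<beta> ((Tb \<beta> ^^ n) 0 + \<beta> ^ n * e)"
    using orbit[of n] by (simp add: Tb_iter_0)
  also have "\<dots> = 0"
    using power_e[of "Suc n"] by (intro Tb_add_eq_0) (simp add: Tb_iter_0 Tb_def mult.assoc[symmetric])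
  finally have "(Tb \<beta> ^^ Suc n) e = 0" .
  moreover have "e \<le> \<beta> ^ k * e" for k
    using \<beta> e by (simp add: one_le_power)
  ultimately have "(Tb \<beta> ^^ k) e = 0 \<or> e \<le> (Tb \<beta> ^^ k) e" for k
    using orbit[of k] Tb_iter_eq_0_mono[where j = "Suc n" and k = k] by (cases "k \<le> n") auto
  then show ?thesis
    using e unfolding self_minimal_def e_def by blast
qed

context
  fixes \<beta> :: real
  assumes \<beta>: "\<beta> > 1"
begin

lemma Tb_iter_left_perturb:
  assumes a: "0 \<le> a" "a < 1" and nz: "(Tb \<beta> ^^ j) a \<noteq> 0"
  obtains \<eta> where "0 < \<eta>"
    "\<And>y. a - \<eta> < y \<Longrightarrow> y \<le> a \<Longrightarrow>
      (Tb \<beta> ^^ j) y = (Tb \<beta> ^^ j) a - \<beta> ^ j * (a - y) \<and> 0 < (Tb \<beta> ^^ j) y"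
proof -
  have pos: "0 < (Tb \<beta> ^^ i) a / \<beta> ^ i" if "i \<le> j" for i
  proof -
    have "(Tb \<beta> ^^ i) a \<noteq> 0"
      using nz Tb_iter_eq_0_mono[where j = i and k = j] that by blast
    then have "0 < (Tb \<beta> ^^ i) a"
      using Tb_iter_nonneg[where x = a and k = i and \<beta> = \<beta>] a(1) by linarith
    then show ?thesis using \<beta> by simp
  qed
  define \<eta> where "\<eta> = Min ((\<lambda>i. (Tb \<beta> ^^ i) a / \<beta> ^ i) ` {..j})"
  show thesis
  proof (rule that)
    show "0 < \<eta>"
      unfolding \<eta>_def using pos by (simp add: Min_gr_iff)
    fix y assume y: "a - \<eta> < y" "y \<le> a"
    have small: "\<beta> ^ i * (a - y) < (Tb \<beta> ^^ i) a" if "i \<le> j" for i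
    proof -
      have "\<eta> \<le> (Tb \<beta> ^^ i) a / \<beta> ^ i"
        unfolding \<eta>_def using that by (intro Min_le) auto
      then have "a - y < (Tb \<beta> ^^ i) a / \<beta> ^ i"
        using y(1) by linarith
      then show ?thesis
        using \<beta> by (simp add: field_simps)
    qed
    have "(Tb \<beta> ^^ j) (a + (y - a)) = (Tb \<beta> ^^ j) a + \<beta> ^ j * (y - a)"
    proof (rule Tb_iter_add)
      fix i assume "i < j"
      have "\<beta> ^ Suc i * (a - y) < (Tb \<beta> ^^ Suc i) a"
        using small[of "Suc i"] \<open>i < j\<close> by (simp del: power_Suc funpow.simps)
      moreover have "(Tb \<beta> ^^ Suc i) a < 1" "0 \<le> \<beta> ^ Suc i * (a - y)"
        using Tb_iter_range[where x = a and k = "Suc i" and \<beta> = \<beta>] a y(2) \<beta> by simp_all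
      moreover have "\<beta> ^ Suc i * (y - a) = - (\<beta> ^ Suc i * (a - y))"
        by (simp add: algebra_simps)
      ultimately show "0 \<le> (Tb \<beta> ^^ Suc i) a + \<beta> ^ Suc i * (y - a) \<and>
          (Tb \<beta> ^^ Suc i) a + \<beta> ^ Suc i * (y - a) < 1"
        by linarith
    qed
    then show "(Tb \<beta> ^^ j) y = (Tb \<beta> ^^ j) a - \<beta> ^ j * (a - y) \<and> 0 < (Tb \<beta> ^^ j) y"
      using small[of j] by (simp add: algebra_simps)
  qed
qed

lemma self_minimal_left_closed:
  assumes a: "0 < a" "a < 1"
    and approx: "\<And>\<eta>. \<eta> > 0 \<Longrightarrow> \<exists>y. self_minimal \<beta> y \<and> a - \<eta> < y \<and> y < a"
  shows "self_minimal \<beta> a"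
  unfolding self_minimal_def
proof (intro conjI allI a)
  fix j
  show "(Tb \<beta> ^^ j) a = 0 \<or> a \<le> (Tb \<beta> ^^ j) a"
  proof (rule ccontr)
    assume "\<not> ?thesis"
    then have z: "(Tb \<beta> ^^ j) a \<noteq> 0" "(Tb \<beta> ^^ j) a < a" by auto
    obtain \<eta> where \<eta>: "0 < \<eta>"
      "\<And>y. a - \<eta> < y \<Longrightarrow> y \<le> a \<Longrightarrow>
        (Tb \<beta> ^^ j) y = (Tb \<beta> ^^ j) a - \<beta> ^ j * (a - y) \<and> 0 < (Tb \<beta> ^^ j) y"
      using Tb_iter_left_perturb[OF _ a(2) z(1)] a(1) by auto
    then obtain y where y: "self_minimal \<beta> y" "a - \<eta> < y" "y < a"
      using approx by blast
    then have orbit: "(Tb \<beta> ^^ j) y = (Tb \<beta> ^^ j) a - \<beta> ^ j * (a - y)" "0 < (Tb \<beta> ^^ j) y"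
      using \<eta>(2)[of y] by auto
    have "y \<le> (Tb \<beta> ^^ j) y"
      using orbit(2) by (intro self_minimalD(3)[OF y(1)]) simp
    moreover have "a - y \<le> \<beta> ^ j * (a - y)"
      using y(3) \<beta> by (simp add: one_le_power)
    ultimately show False
      using orbit z(2) by linarith
  qed
qed

text \<open>Push \<open>a\<close> to the right until the first orbit point reaches \<open>1\<close>; from then on the
  orbit of the perturbed point is \<open>0\<close>.\<close>

lemma Tb_iter_right_perturb_hits_0:
  assumes a: "0 \<le> a" "a < 1" and "0 < \<eta>"
  obtains \<epsilon> j where "0 < \<epsilon>" "\<epsilon> < \<eta>"
    "\<And>k. k \<le> j \<Longrightarrow> (Tb \<beta> ^^ k) (a + \<epsilon>) = (Tb \<beta> ^^ k) a + \<beta> ^ k * \<epsilon>"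
    "(Tb \<beta> ^^ Suc j) (a + \<epsilon>) = 0"
proof -
  define gap where "gap j = (1 - (Tb \<beta> ^^ Suc j) a) / \<beta> ^ Suc j" for j
  have orbit_range: "0 \<le> (Tb \<beta> ^^ k) a" "(Tb \<beta> ^^ k) a < 1" for k
    using Tb_iter_range[where x = a and k = k and \<beta> = \<beta>] a by auto
  have gap_pos: "0 < gap j" for j
    unfolding gap_def using orbit_range(2)[of "Suc j"] \<beta> by simp
  have "\<exists>j. gap j < \<eta>"
  proof -
    obtain n where "1 / \<eta> < \<beta> ^ n"
      using real_arch_pow[OF \<beta>] by blast
    then have "1 / \<beta> ^ n < \<eta>"
      using \<open>0 < \<eta>\<close> \<beta> by (simp add: field_simps)
    moreover have "gap n \<le> 1 / \<beta> ^ n"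
      unfolding gap_def using orbit_range(1)[of "Suc n"] \<beta> by (simp add: frac_le)
    ultimately have "gap n < \<eta>" by linarith
    then show ?thesis ..
  qed
  define j where "j = (LEAST j. gap j < \<eta>)"
  define \<epsilon> where "\<epsilon> = gap j"
  have \<epsilon>: "0 < \<epsilon>" "\<epsilon> < \<eta>"
    unfolding \<epsilon>_def j_def using gap_pos LeastI_ex[OF \<open>\<exists>j. gap j < \<eta>\<close>] by auto
  have "\<epsilon> < gap i" if "i < j" for i
    using not_less_Least[of i "\<lambda>j. gap j < \<eta>"] that \<epsilon>(2) unfolding j_def by simp
  then have below: "\<beta> ^ Suc i * \<epsilon> < 1 - (Tb \<beta> ^^ Suc i) a" if "i < j" for i
    using that \<beta> unfolding gap_def by (simp add: field_simps)
  have orbit: "(Tb \<beta> ^^ k) (a + \<epsilon>) = (Tb \<beta> ^^ k) a + \<beta> ^ k * \<epsilon>" if "k \<le> j" for k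
  proof (rule Tb_iter_add)
    fix i assume "i < k"
    then have "\<beta> ^ Suc i * \<epsilon> < 1 - (Tb \<beta> ^^ Suc i) a"
      using below that by simp
    moreover have "0 \<le> \<beta> ^ Suc i * \<epsilon>"
      using \<epsilon> \<beta> by simp
    ultimately show "0 \<le> (Tb \<beta> ^^ Suc i) a + \<beta> ^ Suc i * \<epsilon> \<and> (Tb \<beta> ^^ Suc i) a + \<beta> ^ Suc i * \<epsilon> < 1"
      using orbit_range(1)[of "Suc i"] by linarith
  qed
  have "(Tb \<beta> ^^ Suc j) (a + \<epsilon>) = Tb \<beta> ((Tb \<beta> ^^ j) a + \<beta> ^ j * \<epsilon>)"
    using orbit[of j] by simp
  also have "\<dots> = 0"
    using \<beta> by (intro Tb_add_eq_0) (simp add: \<epsilon>_def gap_def mult.assoc[symmetric])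
  finally show thesis
    using that \<epsilon> orbit by blast
qed

lemma self_minimal_right_accumulation:
  assumes a: "self_minimal \<beta> a" "\<forall>j. (Tb \<beta> ^^ j) a \<noteq> 0" and b: "a < b" "b \<le> 1"
  shows "\<exists>y. self_minimal \<beta> y \<and> a < y \<and> y < b"
proof -
  have a_le: "a \<le> (Tb \<beta> ^^ k) a" for k
    using a self_minimalD(3) by blast
  obtain \<epsilon> j where \<epsilon>: "0 < \<epsilon>" "\<epsilon> < b - a"
    and orbit: "\<And>k. k \<le> j \<Longrightarrow> (Tb \<beta> ^^ k) (a + \<epsilon>) = (Tb \<beta> ^^ k) a + \<beta> ^ k * \<epsilon>"
    and hit: "(Tb \<beta> ^^ Suc j) (a + \<epsilon>) = 0"
    using Tb_iter_right_perturb_hits_0[of a "b - a"] self_minimalD[OF a(1)] b by auto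
  have "(Tb \<beta> ^^ k) (a + \<epsilon>) = 0 \<or> a + \<epsilon> \<le> (Tb \<beta> ^^ k) (a + \<epsilon>)" for k
  proof (cases "k \<le> j")
    case True
    have "\<epsilon> \<le> \<beta> ^ k * \<epsilon>"
      using \<epsilon>(1) \<beta> by (simp add: one_le_power)
    then show ?thesis
      using orbit[OF True] a_le[of k] by simp
  next
    case False
    then show ?thesis
      using Tb_iter_eq_0_mono[OF hit] by simp
  qed
  then show ?thesis
    using self_minimalD[OF a(1)] \<epsilon> b unfolding self_minimal_def by (intro exI[of _ "a + \<epsilon>"]) auto
qed

lemma beta_rat_if_orbit_hits_0:
  assumes a: "0 < a" "a < 1" and hit: "(Tb \<beta> ^^ J) a = 0"
  shows "a \<in> beta_rat \<beta>"
proof -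
  define m where "m = (LEAST m. (Tb \<beta> ^^ m) a = 0)"
  have hit_m: "(Tb \<beta> ^^ m) a = 0"
    unfolding m_def using hit by (rule LeastI)
  then have "m \<noteq> 0"
    using a by (intro notI) simp
  define z where "z = (Tb \<beta> ^^ (m - 1)) a"
  have "z \<noteq> 0"
    using not_less_Least[of "m - 1" "\<lambda>m. (Tb \<beta> ^^ m) a = 0"] \<open>m \<noteq> 0\<close>
    unfolding z_def m_def by simp
  then have "0 < \<beta> * z"
    using Tb_iter_nonneg[where x = a and k = "m - 1" and \<beta> = \<beta>] a \<beta> unfolding z_def by simp
  moreover have "Tb \<beta> z = 0"
    using hit_m \<open>m \<noteq> 0\<close> unfolding z_def by (cases m) simp_all
  ultimately have "greedy \<beta> a (m - 1) \<noteq> 0"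
    unfolding greedy_def z_def[symmetric] Tb_def by linarith
  moreover have "greedy \<beta> a i = 0" if "i \<ge> m" for i
    using Tb_iter_eq_0_mono[OF hit_m that] by (simp add: greedy_def)
  ultimately show ?thesis
    unfolding beta_rat_def using a \<open>m \<noteq> 0\<close> by (auto intro!: exI[of _ m])
qed

end

section \<open>Bifurcation parameters\<close>

lemma self_minimal_Kset_change:
  assumes y: "self_minimal \<beta> y" and t: "0 < t" "t < 1" and "\<delta> > 0" "\<bar>y - t\<bar> < \<delta>"
  shows "\<exists>t'\<in>{0..1}. \<bar>t' - t\<bar> < \<delta> \<and> Kset \<beta> t' \<noteq> Kset \<beta> t"
proof -
  have y01: "0 < y" "y < 1"
    using self_minimalD[OF y] by auto
  have y_in: "y \<in> Kset \<beta> s" if "0 < s" "s \<le> y" for s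
  proof -
    have "(Tb \<beta> ^^ k) y \<notin> {0<..<s}" for k
      using self_minimalD(3)[OF y, of k] that by (cases "(Tb \<beta> ^^ k) y = 0") auto
    then show ?thesis
      using y01 that unfolding Kset_def by auto
  qed
  have y_notin: "y \<notin> Kset \<beta> s" if "y < s" "s \<le> 1" for s
    using y01 that unfolding Kset_def by (auto intro: exI[of _ 0])
  show ?thesis
  proof (cases "y < t")
    case True
    then show ?thesis
      using y_in[of y] y_notin[of t] y01 t assms(5) by (intro bexI[of _ y]) auto
  next
    case False
    define t' where "t' = min 1 ((y + t + \<delta>) / 2)"
    have "y < t + \<delta>"
      using assms(5) by (simp add: abs_less_iff)
    then have "y < t'" "t' \<le> 1" "t' < t + \<delta>"
      unfolding t'_def using y01 False by (auto simp: min_def)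
    then show ?thesis
      using y_in[of t] y_notin[of t'] False t by (intro bexI[of _ t']) auto
  qed
qed

lemma self_minimal_in_Ubif: "self_minimal \<beta> y \<Longrightarrow> y \<in> Ubif \<beta>"
  using self_minimal_Kset_change[of \<beta> y y] self_minimalD[of \<beta> y]
  unfolding Ubif_def bifurcation_def by auto

lemma not_Ubif_self_minimal_gap:
  assumes "t \<in> {0..<1}" "t \<notin> Ubif \<beta>"
  obtains \<delta> where "0 < t" "0 < \<delta>" "\<And>y. self_minimal \<beta> y \<Longrightarrow> \<delta> \<le> \<bar>y - t\<bar>"
proof -
  have t: "0 < t" "t < 1" and "\<not> bifurcation \<beta> t"
    using assms unfolding Ubif_def bifurcation_def by auto
  then obtain \<delta> where \<delta>: "\<delta> > 0" "\<forall>t'\<in>{0..1}. \<bar>t' - t\<bar> < \<delta> \<longrightarrow> Kset \<beta> t' = Kset \<beta> t"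
    unfolding bifurcation_def by auto
  have "\<delta> \<le> \<bar>y - t\<bar>" if "self_minimal \<beta> y" for y
    using self_minimal_Kset_change[OF that t \<delta>(1)] \<delta>(2) by force
  then show thesis using that t \<delta>(1) by blast
qed

lemma self_minimal_Sup:
  fixes \<beta> :: real
  assumes \<beta>: "\<beta> > 1" and A: "A \<noteq> {}" "\<And>y. y \<in> A \<Longrightarrow> self_minimal \<beta> y" and "Sup A < 1"
  shows "self_minimal \<beta> (Sup A)"
proof (cases "Sup A \<in> A")
  case False
  have bdd: "bdd_above A"
    using A(2) self_minimalD(2) unfolding bdd_above_def by (meson less_imp_le)
  obtain y0 where "y0 \<in> A" using A(1) by blast
  then have "0 < Sup A"
    using self_minimalD(1)[OF A(2)] cSup_upper[OF _ bdd] by (meson less_le_trans)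
  then show ?thesis
  proof (rule self_minimal_left_closed[OF \<beta> _ \<open>Sup A < 1\<close>])
    fix \<eta> :: real assume "0 < \<eta>"
    then obtain y where "y \<in> A" "Sup A - \<eta> < y"
      using less_cSup_iff[OF A(1) bdd, of "Sup A - \<eta>"] by auto
    moreover have "y < Sup A"
      using cSup_upper[OF \<open>y \<in> A\<close> bdd] False \<open>y \<in> A\<close> by (cases "y = Sup A") auto
    ultimately show "\<exists>y. self_minimal \<beta> y \<and> Sup A - \<eta> < y \<and> y < Sup A"
      using A(2) by blast
  qed
qed (use A(2) in blast)

lemma greatest_self_minimal_below:
  fixes \<beta> :: real
  assumes \<beta>: "\<beta> > 1" and t: "0 < t" "t < 1"
    and gap: "0 < \<delta>" "\<And>y. self_minimal \<beta> y \<Longrightarrow> \<delta> \<le> \<bar>y - t\<bar>"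
  obtains a where "self_minimal \<beta> a" "a < t" "\<And>y. self_minimal \<beta> y \<Longrightarrow> y < t \<Longrightarrow> y \<le> a"
proof -
  define A where "A = {y. self_minimal \<beta> y \<and> y < t}"
  obtain n where "1 / t < \<beta> ^ n"
    using real_arch_pow[OF \<beta>] by blast
  then have "1 / \<beta> ^ n < t"
    using t \<beta> by (simp add: field_simps)
  moreover have "1 / \<beta> ^ Suc n < 1 / \<beta> ^ n"
    using \<beta> by (simp add: field_simps)
  ultimately have "1 / \<beta> ^ Suc n \<in> A"
    unfolding A_def using self_minimal_inverse_power[OF \<beta>] by simp
  then have A: "A \<noteq> {}" by blast
  have bdd: "bdd_above A"
    unfolding A_def bdd_above_def by (auto intro: less_imp_le)
  have "Sup A \<le> t - \<delta>"
    using A gap unfolding A_def by (intro cSup_least) force+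
  then have "Sup A < t"
    using gap(1) by simp
  moreover have "self_minimal \<beta> (Sup A)"
    using self_minimal_Sup[OF \<beta> A] \<open>Sup A < t\<close> t unfolding A_def by simp
  ultimately show thesis
    using that cSup_upper[OF _ bdd] unfolding A_def by blast
qed

theorem mainTheorem4:
  fixes \<beta> t :: real
  assumes "\<beta> > 1" and "t \<in> {0..<1}" and "t \<notin> Ubif \<beta>"
  shows "\<exists>r \<in> beta_rat \<beta>. t \<in> {r<..<rstar \<beta> r} \<and> r \<in> Ubif \<beta> \<and>
           (rstar \<beta> r \<in> Ubif \<beta> \<or> rstar \<beta> r = 1)"
proof -
  obtain \<delta> where t: "0 < t" "t < 1" and gap: "0 < \<delta>" "\<And>y. self_minimal \<beta> y \<Longrightarrow> \<delta> \<le> \<bar>y - t\<bar>"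
    using not_Ubif_self_minimal_gap[OF assms(2,3)] assms(2) by auto
  obtain r where r: "self_minimal \<beta> r" "r < t" and greatest: "\<And>y. self_minimal \<beta> y \<Longrightarrow> y < t \<Longrightarrow> y \<le> r"
    using greatest_self_minimal_below[OF assms(1) t gap] by blast
  have "\<exists>J. (Tb \<beta> ^^ J) r = 0"
  proof (rule ccontr)
    assume "\<nexists>J. (Tb \<beta> ^^ J) r = 0"
    then obtain y where "self_minimal \<beta> y" "r < y" "y < t"
      using self_minimal_right_accumulation[OF assms(1) r(1) _ r(2)] t by auto
    then show False using greatest by force
  qed
  then have r_rat: "r \<in> beta_rat \<beta>"
    using beta_rat_if_orbit_hits_0[OF assms(1)] self_minimalD[OF r(1)] by blast
  have "t < rstar \<beta> r \<and> (rstar \<beta> r \<in> Ubif \<beta> \<or> rstar \<beta> r = 1)"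
    using rstar_cases[OF assms(1) r_rat r(1)]
  proof
    assume r_star: "self_minimal \<beta> (rstar \<beta> r) \<and> r < rstar \<beta> r"
    then have "\<not> rstar \<beta> r < t" "rstar \<beta> r \<noteq> t"
      using greatest[of "rstar \<beta> r"] gap by force+
    then show ?thesis
      using self_minimal_in_Ubif r_star by auto
  qed (use t in simp)
  then show ?thesis
    using r_rat r(2) self_minimal_in_Ubif[OF r(1)] by auto
qed

end
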